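(* Let $p\ge5$ be a prime. Then \[ \sum_{j=0}^{p-3}B_j\equiv-1\pmod p . \]
   Context: $B_j$ is the $j$th Bernoulli number ($\frac{t}{e^t-1}=\sum_{m\ge0}B_m\frac{t^m}{m!}$). For rationals whose denominators are coprime to $p$, $a\equiv b\pmod p$ means $a-b$ is $p$ times a rational with denominator coprime to $p$. *)

theory Defs
  imports Complex_Main "HOL-Computational_Algebra.Primes"
begin

text \<open>Bernoulli numbers with the convention t/(e^t-1) = sum B_m t^m/m!, i.e. B_1 = -1/2,
  given by the recurrence  sum_{k=0}^{m} (m+1 choose k) B_k = [m = 0].\<close>
fun bernoulli :: "nat \<Rightarrow> rat" where
  "bernoulli n = (if n = 0 then 1
     else - (\<Sum>k<n. (of_nat ((n + 1) choose k) * bernoulli k)) / of_nat (n + 1))"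

declare bernoulli.simps [simp del]

definition p_integral :: "nat \<Rightarrow> rat \<Rightarrow> bool" where
  "p_integral p x = coprime (snd (quotient_of x)) (int p)"

definition rat_cong :: "rat \<Rightarrow> rat \<Rightarrow> nat \<Rightarrow> bool" where
  "rat_cong a b p = (\<exists>c. p_integral p c \<and> a - b = of_nat p * c)"

end

(*
  Take n = p - 1 in the defining recurrence: the sum over k < p - 1 of
  binom(p - 1, k) B_k vanishes.  Modulo p, binom(p - 1, k) is congruent to (-1)^k,
  and B_0, ..., B_{p-2} are p-integral because the recurrence computing them only
  divides by 2, ..., p - 1.  Hence the alternating sum of B_0, ..., B_{p-2} is
  divisible by p.  Since t/(e^t - 1) + t/2 is even, all odd Bernoulli numbers
  except B_1 = -1/2 vanish; so the alternating sum equals B_0 + ... + B_{p-2} + 1,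
  and B_{p-2} = 0 as p - 2 is odd.
*)
theory Submission
  imports Defs "HOL-Computational_Algebra.Formal_Power_Series" "HOL-Number_Theory.Cong"
begin

unbundle fps_syntax

lemma p_integral_iff_fraction:
  "p_integral p x \<longleftrightarrow> (\<exists>a b. coprime b (int p) \<and> x = of_int a / of_int b)"
proof
  assume "p_integral p x"
  then show "\<exists>a b. coprime b (int p) \<and> x = of_int a / of_int b"
    unfolding p_integral_def by (metis prod.collapse quotient_of_div)
next
  assume "\<exists>a b. coprime b (int p) \<and> x = of_int a / of_int b"
  then obtain a b where b: "coprime b (int p)" and x: "x = of_int a / of_int b"
    by blast
  obtain n d where nd: "quotient_of x = (n, d)"
    by (cases "quotient_of x")
  show "p_integral p x"
  proof (cases "b = 0")
    case True
    then show ?thesis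
      using x by (simp add: p_integral_def)
  next
    case False
    have "x = of_int n / of_int d" "d > 0" "coprime n d"
      using nd quotient_of_div quotient_of_denom_pos quotient_of_coprime by blast+
    with x False have "n * b = a * d"
      by (simp add: field_simps flip: of_int_mult of_int_eq_iff)
    then have "d dvd b"
      using \<open>coprime n d\<close> by (metis coprime_commute coprime_dvd_mult_right_iff dvd_triv_right)
    then have "coprime d (int p)"
      using b by (metis coprime_divisors dvd_refl)
    then show ?thesis
      using nd by (simp add: p_integral_def)
  qed
qed

lemma p_integral_of_int [simp]: "p_integral p (of_int a)"
  by (simp add: p_integral_def)

lemma p_integral_of_nat [simp]: "p_integral p (of_nat n)"
  using p_integral_of_int[of p "int n"] by simp

lemma p_integral_add: "p_integral p x \<Longrightarrow> p_integral p y \<Longrightarrow> p_integral p (x + y)"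
  unfolding p_integral_iff_fraction
proof (elim exE conjE)
  fix a b c d
  assume b: "coprime b (int p)" and x: "x = of_int a / of_int b"
    and d: "coprime d (int p)" and y: "y = of_int c / of_int d"
  show "\<exists>a b. coprime b (int p) \<and> x + y = of_int a / of_int b"
  proof (cases "b = 0 \<or> d = 0")
    case True
    then show ?thesis
      using b d x y by (metis add.commute add_0 div_by_0 of_int_0)
  next
    case False
    then have "x + y = of_int (a * d + c * b) / of_int (b * d)"
      using x y by (simp add: field_simps)
    moreover have "coprime (b * d) (int p)"
      using b d by simp
    ultimately show ?thesis
      by blast
  qed
qed

lemma p_integral_mult: "p_integral p x \<Longrightarrow> p_integral p y \<Longrightarrow> p_integral p (x * y)"
  unfolding p_integral_iff_fraction
proof (elim exE conjE)
  fix a b c d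
  assume "coprime b (int p)" "x = of_int a / of_int b" "coprime d (int p)" "y = of_int c / of_int d"
  then show "\<exists>a b. coprime b (int p) \<and> x * y = of_int a / of_int b"
    by (intro exI[of _ "a * c"] exI[of _ "b * d"]) simp
qed

lemma p_integral_uminus: "p_integral p x \<Longrightarrow> p_integral p (- x)"
  using p_integral_mult[OF p_integral_of_int[of p "-1"]] by simp

lemma p_integral_divide_of_nat:
  "p_integral p x \<Longrightarrow> coprime m p \<Longrightarrow> p_integral p (x / of_nat m)"
  unfolding p_integral_iff_fraction
proof (elim exE conjE)
  fix a b
  assume "coprime b (int p)" "x = of_int a / of_int b" "coprime m p"
  then show "\<exists>a b. coprime b (int p) \<and> x / of_nat m = of_int a / of_int b"
    by (intro exI[of _ a] exI[of _ "b * int m"]) simp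
qed

lemma p_integral_sum: "(\<And>i. i \<in> A \<Longrightarrow> p_integral p (f i)) \<Longrightarrow> p_integral p (\<Sum>i\<in>A. f i)"
  using p_integral_of_int[of p 0]
  by (induction A rule: infinite_finite_induct) (auto intro: p_integral_add)

lemma rat_cong_refl [simp]: "rat_cong a a p"
  unfolding rat_cong_def using p_integral_of_int[of p 0] by auto

lemma rat_cong_sym: "rat_cong a b p \<Longrightarrow> rat_cong b a p"
  unfolding rat_cong_def
proof (elim exE conjE)
  fix c
  assume "p_integral p c" "a - b = of_nat p * c"
  then show "\<exists>c. p_integral p c \<and> b - a = of_nat p * c"
    by (intro exI[of _ "- c"]) (auto intro: p_integral_uminus)
qed

lemma rat_cong_add:
  "rat_cong a b p \<Longrightarrow> rat_cong c d p \<Longrightarrow> rat_cong (a + c) (b + d) p"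
  unfolding rat_cong_def
proof (elim exE conjE)
  fix e f
  assume "p_integral p e" "a - b = of_nat p * e" "p_integral p f" "c - d = of_nat p * f"
  then show "\<exists>e. p_integral p e \<and> a + c - (b + d) = of_nat p * e"
    by (intro exI[of _ "e + f"]) (auto intro: p_integral_add simp: distrib_left)
qed

lemma rat_cong_mult_right:
  "rat_cong a b p \<Longrightarrow> p_integral p c \<Longrightarrow> rat_cong (a * c) (b * c) p"
  unfolding rat_cong_def
proof (elim exE conjE)
  fix e
  assume "p_integral p e" "a - b = of_nat p * e" "p_integral p c"
  then show "\<exists>e. p_integral p e \<and> a * c - b * c = of_nat p * e"
    by (intro exI[of _ "e * c"]) (auto intro: p_integral_mult simp flip: left_diff_distrib)
qed

lemma rat_cong_sum:
  "(\<And>i. i \<in> A \<Longrightarrow> rat_cong (f i) (g i) p) \<Longrightarrow> rat_cong (\<Sum>i\<in>A. f i) (\<Sum>i\<in>A. g i) p"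
  by (induction A rule: infinite_finite_induct) (auto intro: rat_cong_add)

lemma rat_cong_of_int: "[a = b] (mod int p) \<Longrightarrow> rat_cong (of_int a) (of_int b) p"
proof -
  assume "[a = b] (mod int p)"
  then obtain k where "a - b = int p * k"
    by (auto simp: cong_iff_dvd_diff elim: dvdE)
  then have "of_int a - of_int b = of_nat p * (of_int k :: rat)"
    by (metis of_int_diff of_int_mult of_int_of_nat_eq)
  then show ?thesis
    unfolding rat_cong_def by (blast intro: p_integral_of_int)
qed

lemma cong_binomial_prime_minus_one:
  assumes "prime p" and "k < p"
  shows "[int ((p - 1) choose k) = (-1) ^ k] (mod int p)"
  using \<open>k < p\<close>
proof (induction k)
  case 0
  then show ?case by simp
next
  case (Suc k)
  have "p dvd p choose Suc k"
    using Suc.prems assms(1) by (intro dvd_choose_prime) auto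
  moreover have "p choose Suc k = ((p - 1) choose k) + ((p - 1) choose Suc k)"
    using prime_gt_0_nat[OF assms(1)] binomial_Suc_Suc[of "p - 1" k] by simp
  ultimately have "[int ((p - 1) choose k) + int ((p - 1) choose Suc k) = 0] (mod int p)"
    by (metis cong_0_iff int_dvd_int_iff of_nat_add)
  then have "[int ((p - 1) choose Suc k) = - int ((p - 1) choose k)] (mod int p)"
    by (simp add: cong_iff_dvd_diff add.commute)
  also have "[- int ((p - 1) choose k) = - ((-1) ^ k)] (mod int p)"
    using Suc by (simp add: cong_minus_minus_iff)
  finally show ?case by simp
qed

lemma bernoulli_0 [simp]: "bernoulli 0 = 1"
  by (simp add: bernoulli.simps)

lemma bernoulli_1: "bernoulli 1 = - 1 / 2"
  by (simp add: bernoulli.simps)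

lemma sum_binomial_bernoulli:
  "(\<Sum>k<n. of_nat (n choose k) * bernoulli k) = (if n = 1 then 1 else 0)"
proof (cases "n \<le> 1")
  case True
  then show ?thesis
    by (cases n) auto
next
  case False
  then obtain m where n: "n = Suc m" and "m > 0"
    by (cases n) auto
  then have "of_nat (m + 1) * bernoulli m = - (\<Sum>k<m. of_nat ((m + 1) choose k) * bernoulli k)"
    by (subst bernoulli.simps) (simp del: of_nat_Suc)
  then show ?thesis
    using n \<open>m > 0\<close> by (simp del: of_nat_Suc)
qed

lemma p_integral_bernoulli:
  assumes "prime p"
  shows "n + 1 < p \<Longrightarrow> p_integral p (bernoulli n)"
proof (induction n rule: less_induct)
  case (less n)
  show ?case
  proof (cases "n = 0")
    case False
    have "coprime (n + 1) p"
      using less.prems assms by (metis coprime_commute nat_dvd_not_less prime_imp_coprime zero_less_Suc Suc_eq_plus1)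
    moreover have "p_integral p (\<Sum>k<n. of_nat ((n + 1) choose k) * bernoulli k)"
      using less by (intro p_integral_sum p_integral_mult) simp_all
    ultimately
    have "p_integral p (- (\<Sum>k<n. of_nat ((n + 1) choose k) * bernoulli k) / of_nat (n + 1))"
      by (intro p_integral_divide_of_nat p_integral_uminus)
    then show ?thesis
      using False by (subst bernoulli.simps) simp
  qed (use p_integral_of_nat[of p 1] in simp)
qed

lemma egf_mult_fps_exp_nth:
  fixes c :: "'a :: field_char_0"
  shows "(Abs_fps (\<lambda>n. c ^ n * a n / fact n) * fps_exp c) $ n
           = c ^ n / fact n * (\<Sum>k\<le>n. of_nat (n choose k) * a k)"
proof -
  have "c ^ k * a k / fact k * (c ^ (n - k) / fact (n - k))
          = c ^ n / fact n * (of_nat (n choose k) * a k)" if "k \<le> n" for k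
    using that by (simp add: binomial_fact field_simps flip: power_add)
  then show ?thesis
    by (simp add: fps_mult_nth atLeast0AtMost sum_distrib_left)
qed

lemma bernoulli_egf_scaled:
  "Abs_fps (\<lambda>n. c ^ n * bernoulli n / fact n) * (fps_exp c - 1) = fps_const c * fps_X"
    (is "?B * _ = _")
proof (rule fps_ext)
  fix n
  have "(?B * (fps_exp c - 1)) $ n = (?B * fps_exp c) $ n - ?B $ n"
    by (simp add: right_diff_distrib)
  also have "\<dots> = c ^ n / fact n * (\<Sum>k\<le>n. of_nat (n choose k) * bernoulli k)
                     - c ^ n * bernoulli n / fact n"
    by (simp only: egf_mult_fps_exp_nth fps_nth_Abs_fps)
  also have "\<dots> = c ^ n / fact n * (\<Sum>k<n. of_nat (n choose k) * bernoulli k)"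
    by (simp add: lessThan_Suc_atMost[symmetric] algebra_simps)
  finally show "(?B * (fps_exp c - 1)) $ n = (fps_const c * fps_X) $ n"
    by (cases "n = 1") (simp_all add: sum_binomial_bernoulli)
qed

lemma bernoulli_odd_eq_0:
  assumes "odd n" and "n \<noteq> 1"
  shows "bernoulli n = 0"
proof -
  \<comment> \<open>\<open>B c\<close> is the series of \<open>x / (e\<^sup>x - 1)\<close> evaluated at \<open>c x\<close>\<close>
  define B :: "rat \<Rightarrow> rat fps" where "B c = Abs_fps (\<lambda>n. c ^ n * bernoulli n / fact n)" for c
  let ?E = "fps_exp (1 :: rat)" and ?E' = "fps_exp (-1 :: rat)"
  have "fps_const (-1 :: rat) = -1"
    by (metis fps_const_neg fps_const_1_eq_1)
  have "?E * ?E' = 1"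
    by (simp flip: fps_exp_add_mult)
  have "B (-1) * (?E' - 1) * ?E = - fps_X * ?E"
    using bernoulli_egf_scaled[of "-1"] \<open>fps_const (-1) = -1\<close> by (simp add: B_def)
  then have "B (-1) * (?E * ?E' - ?E) = - fps_X * ?E"
    by (simp add: algebra_simps)
  then have "B (-1) * (?E - 1) = fps_X * ?E"
    using \<open>?E * ?E' = 1\<close> by (simp add: algebra_simps)
  then have "(B (-1) - fps_X) * (?E - 1) = B 1 * (?E - 1)"
    using bernoulli_egf_scaled[of 1] by (simp add: B_def algebra_simps)
  moreover have "?E - 1 \<noteq> 0"
    by (metis fps_exp_eq_1_iff right_minus_eq zero_neq_one)
  ultimately have "B (-1) - fps_X = B 1"
    by simp
  then have "(B (-1) - fps_X) $ n = B 1 $ n"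
    by simp
  then show ?thesis
    using assms by (simp add: B_def)
qed

lemma sum_alternating_bernoulli:
  assumes "n \<ge> 2"
  shows "(\<Sum>k<n. (-1) ^ k * bernoulli k) = (\<Sum>k<n. bernoulli k) + 1"
proof -
  have "(-1) ^ k * bernoulli k = bernoulli k + (if k = 1 then 1 else 0)" for k
    by (cases "even k"; cases "k = 1") (simp_all add: bernoulli_1[unfolded One_nat_def] bernoulli_odd_eq_0)
  then show ?thesis
    using assms by (simp add: sum.distrib)
qed

theorem corollary4:
  fixes p :: nat
  assumes "prime p" and "p \<ge> 5"
  shows "rat_cong (\<Sum>j=0..p-3. bernoulli j) (-1) p"
proof -
  have "rat_cong (\<Sum>k<p-1. of_nat ((p - 1) choose k) * bernoulli k)
                 (\<Sum>k<p-1. (-1) ^ k * bernoulli k) p"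
  proof (rule rat_cong_sum)
    fix k
    assume "k \<in> {..<p-1}"
    then have "[int ((p - 1) choose k) = (-1) ^ k] (mod int p)"
      using assms(1) by (intro cong_binomial_prime_minus_one) auto
    moreover have "p_integral p (bernoulli k)"
      using \<open>k \<in> {..<p-1}\<close> assms(1) by (intro p_integral_bernoulli) auto
    ultimately have "rat_cong (of_int (int ((p - 1) choose k)) * bernoulli k)
                              (of_int ((-1) ^ k) * bernoulli k) p"
      by (intro rat_cong_mult_right rat_cong_of_int)
    then show "rat_cong (of_nat ((p - 1) choose k) * bernoulli k) ((-1) ^ k * bernoulli k) p"
      by simp
  qed
  moreover have "(\<Sum>k<p-1. of_nat ((p - 1) choose k) * bernoulli k) = 0"
    using sum_binomial_bernoulli[of "p - 1"] assms(2) by simp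
  moreover have "(\<Sum>k<p-1. (-1) ^ k * bernoulli k) = (\<Sum>j=0..p-3. bernoulli j) + 1"
  proof -
    have "odd p"
      using assms by (intro prime_odd_nat) auto
    then have "bernoulli (p - 2) = 0"
      using assms(2) by (intro bernoulli_odd_eq_0) auto
    moreover have "{..<p-1} = insert (p - 2) {0..p-3}"
      using assms(2) by auto
    ultimately show ?thesis
      using sum_alternating_bernoulli[of "p - 1"] assms(2) by simp
  qed
  ultimately have "rat_cong ((\<Sum>j=0..p-3. bernoulli j) + 1) 0 p"
    by (simp add: rat_cong_sym)
  then show ?thesis
    by (simp add: rat_cong_def)
qed

end
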